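(* Consider finitely many tanks, each colored red or blue, with arbitrary real initial water levels $x_a$. Arrange the tanks in a row in order of decreasing initial water level, breaking ties so that among tanks of equal level, all blue tanks are placed to the left of all red tanks. Consider any execution of the following procedure: while some red tank is positioned (anywhere) to the left of some blue tank in the row, choose any red tank $a$ immediately to the left of (i.e. adjacent to) a blue tank $b$, equilibrate $a$ and $b$, and then swap the positions of $a$ and $b$ in the row. Then this procedure terminates, and the total amount of water in the blue tanks at the end is at least as large as the total amount of water in the blue tanks at the end of any other finite sequence of pairwise equilibrations applied to the same initial configuration.
   Context: Equilibrating two tanks $a \neq b$ with water levels $x_a, x_b$ replaces both levels by $\frac{x_a+x_b}{2}$ and leaves all other tanks unchanged. A strategy is a finite sequence of pairs of distinct tanks, executed as the corresponding equilibrations; "transferring more water from the red tanks to the blue tanks" means ending with a larger total amount of water in the blue tanks. *)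

theory Defs
  imports Complex_Main
begin

definition equil :: "'a \<Rightarrow> 'a \<Rightarrow> ('a \<Rightarrow> real) \<Rightarrow> ('a \<Rightarrow> real)" where
  "equil a b x = x(a := (x a + x b) / 2, b := (x a + x b) / 2)"

definition run_strategy :: "('a \<times> 'a) list \<Rightarrow> ('a \<Rightarrow> real) \<Rightarrow> ('a \<Rightarrow> real)" where
  "run_strategy s x = fold (\<lambda>(a, b) y. equil a b y) s x"

definition valid_strategy :: "('a \<times> 'a) list \<Rightarrow> bool" where
  "valid_strategy s \<longleftrightarrow> (\<forall>(a, b) \<in> set s. a \<noteq> b)"

definition blue_total :: "('a \<Rightarrow> bool) \<Rightarrow> ('a \<Rightarrow> real) \<Rightarrow> real" where
  "blue_total blue x = (\<Sum>a\<in>{a. blue a}. x a)"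

definition initial_row :: "('a \<Rightarrow> bool) \<Rightarrow> ('a \<Rightarrow> real) \<Rightarrow> 'a list \<Rightarrow> bool" where
  "initial_row blue x r \<longleftrightarrow> distinct r \<and> set r = UNIV \<and>
     sorted_wrt (\<lambda>a b. x a > x b \<or> (x a = x b \<and> (blue a \<or> \<not> blue b))) r"

definition red_left_of_blue :: "('a \<Rightarrow> bool) \<Rightarrow> 'a list \<Rightarrow> bool" where
  "red_left_of_blue blue r \<longleftrightarrow> (\<exists>i j. i < j \<and> j < length r \<and> \<not> blue (r ! i) \<and> blue (r ! j))"

definition proc_step :: "('a \<Rightarrow> bool) \<Rightarrow> ('a list \<times> ('a \<Rightarrow> real)) \<Rightarrow> ('a list \<times> ('a \<Rightarrow> real)) \<Rightarrow> bool" where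
  "proc_step blue s s' \<longleftrightarrow> red_left_of_blue blue (fst s) \<and>
     (\<exists>i. Suc i < length (fst s) \<and> \<not> blue (fst s ! i) \<and> blue (fst s ! Suc i) \<and>
        snd s' = equil (fst s ! i) (fst s ! Suc i) (snd s) \<and>
        fst s' = (fst s)[i := fst s ! Suc i, Suc i := fst s ! i])"

end

theory Submission
  imports Defs "HOL-Library.Indicator_Function"
begin

(* For a set S of tanks with k blue and p red members and q blue tanks outside S, let
   potential S = k + gain p q, where gain p q is the water that p full red tanks can pass to
   q empty blue ones. Starting from the indicator of S, no strategy brings more than
   potential S into the blue tanks: the first equilibration turns the indicator into the
   average of two indicators whose potentials average to at most potential S.
   Equilibration is linear, so writing the levels of a row sorted by decreasing level as
   a combination of indicators of its prefixes (Abel summation) bounds every strategy by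
   the row value, the sum of each level times the increase of the potential when its tank
   joins the prefix. Swapping an adjacent red-blue pair after equilibrating it keeps the
   row value, and once all blue tanks precede all red ones the row value is the blue
   total. Each swap removes a red-before-blue inversion, so the procedure terminates. *)

(* Equilibrating a full red tank with an empty blue one leaves both at level 1/2, the
   average of the configurations (full, full) and (empty, empty). *)
fun gain :: "nat \<Rightarrow> nat \<Rightarrow> real" where
  "gain 0 q = 0"
| "gain (Suc p) 0 = 0"
| "gain (Suc p) (Suc q) = (1 + gain p (Suc q) + gain (Suc p) q) / 2"

lemma gain_0_right [simp]: "gain p 0 = 0"
  by (cases p) auto

lemma gain_nonneg: "0 \<le> gain p q"
  by (induction p q rule: gain.induct) auto

lemma gain_le_left: "gain p q \<le> p"
  by (induction p q rule: gain.induct) auto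

lemma gain_le_right: "gain p q \<le> q"
  by (induction p q rule: gain.induct) auto

lemma gain_Suc_Suc_le: "gain (Suc p) (Suc q) \<le> 1 + gain p q"
proof (induction p q rule: gain.induct)
  case (1 q)
  show ?case
    using gain_le_left[of 1 "Suc q"] by simp
next
  case (2 p)
  show ?case
    using gain_le_right[of "Suc (Suc p)" 1] by simp
next
  case (3 p q)
  then show ?case
    using gain.simps(3)[of "Suc p" "Suc q"] gain.simps(3)[of p q] by argo
qed

definition card_filter :: "('a \<Rightarrow> bool) \<Rightarrow> 'a set \<Rightarrow> nat" where
  "card_filter P S = card {z \<in> S. P z}"

lemma card_filter_insert [simp]:
  assumes "finite S" "a \<notin> S"
  shows "card_filter P (insert a S) = (if P a then Suc (card_filter P S) else card_filter P S)"
proof -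
  have "{z \<in> insert a S. P z} = (if P a then insert a {z \<in> S. P z} else {z \<in> S. P z})"
    by auto
  then show ?thesis using assms by (simp add: card_filter_def)
qed

lemma card_filter_Compl:
  fixes S :: "'a::finite set"
  assumes "a \<notin> S"
  shows "card_filter P (- S)
    = (if P a then Suc (card_filter P (- insert a S)) else card_filter P (- insert a S))"
proof -
  have "- S = insert a (- insert a S)" using assms by auto
  then show ?thesis by (metis Compl_iff finite insertI1 card_filter_insert)
qed

definition potential :: "('a::finite \<Rightarrow> bool) \<Rightarrow> 'a set \<Rightarrow> real" where
  "potential bl S = card_filter bl S + gain (card_filter (\<lambda>z. \<not> bl z) S) (card_filter bl (- S))"

lemma potential_exchange:
  assumes "bl u = bl v" "u \<notin> Z" "v \<notin> Z"
  shows "potential bl (insert v Z) = potential bl (insert u Z)"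
proof (cases "u = v")
  case False
  then show ?thesis
    using assms card_filter_Compl[of u "insert v Z" bl] card_filter_Compl[of v "insert u Z" bl]
    by (simp add: potential_def insert_commute)
qed simp

lemma potential_red_blue:
  assumes "\<not> bl a" "bl b" "a \<notin> Z" "b \<notin> Z"
  shows potential_insert_red:
      "2 * potential bl (insert a Z) = potential bl Z + potential bl (insert a (insert b Z))"
    and potential_insert_blue:
      "potential bl Z + potential bl (insert a (insert b Z)) \<le> 2 * potential bl (insert b Z)"
proof -
  define k p q where "k = card_filter bl Z" and "p = card_filter (\<lambda>z. \<not> bl z) Z"
    and "q = card_filter bl (- insert a (insert b Z))"
  have "a \<noteq> b" using assms by auto
  then have Compl: "card_filter bl (- insert a Z) = Suc q" "card_filter bl (- insert b Z) = q"
      "card_filter bl (- Z) = Suc q" "card_filter bl (- insert a (insert b Z)) = q"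
    using assms card_filter_Compl[of b "insert a Z" bl] card_filter_Compl[of a "insert b Z" bl]
      card_filter_Compl[of a Z bl] card_filter_Compl[of b Z bl]
    by (simp_all add: q_def insert_commute)
  have "potential bl Z = k + gain p (Suc q)"
    and "potential bl (insert a Z) = k + gain (Suc p) (Suc q)"
    and "potential bl (insert b Z) = Suc k + gain p q"
    and "potential bl (insert a (insert b Z)) = Suc k + gain (Suc p) q"
    using assms Compl \<open>a \<noteq> b\<close> by (simp_all add: potential_def k_def p_def)
  then show "2 * potential bl (insert a Z) = potential bl Z + potential bl (insert a (insert b Z))"
    and "potential bl Z + potential bl (insert a (insert b Z)) \<le> 2 * potential bl (insert b Z)"
    using gain_Suc_Suc_le[of p q] by simp_all
qed

lemma potential_empty: "potential bl {} = 0"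
  by (simp add: potential_def card_filter_def)

lemma potential_no_red:
  assumes "\<forall>z\<in>X. bl z"
  shows "potential bl X = card_filter bl X"
proof -
  have "{z \<in> X. \<not> bl z} = {}"
    using assms by auto
  then have "card_filter (\<lambda>z. \<not> bl z) X = 0"
    by (simp only: card_filter_def card.empty)
  then show ?thesis
    by (simp add: potential_def)
qed

lemma potential_contains_blue:
  assumes "{z. bl z} \<subseteq> X"
  shows "potential bl X = card_filter bl UNIV"
proof -
  have "{z \<in> X. bl z} = {z \<in> UNIV. bl z}" "{z \<in> - X. bl z} = {}"
    using assms by auto
  then have "card_filter bl X = card_filter bl UNIV" "card_filter bl (- X) = 0"
    by (simp_all only: card_filter_def card.empty)
  then show ?thesis
    by (simp add: potential_def)
qed

lemma run_strategy_Nil [simp]: "run_strategy [] y = y"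
  by (simp add: run_strategy_def)

lemma run_strategy_Cons [simp]: "run_strategy ((a, b) # s) y = run_strategy s (equil a b y)"
  by (simp add: run_strategy_def)

lemma equil_commute: "equil a b = equil b a"
  by (auto simp: equil_def fun_eq_iff)

lemma equil_sum:
  "equil a b (\<lambda>z. \<Sum>i\<in>I. c i * f i z) = (\<lambda>z. \<Sum>i\<in>I. c i * equil a b (f i) z)"
  by (auto simp: equil_def fun_eq_iff sum.distrib distrib_left add_divide_distrib
      simp flip: sum_divide_distrib)

lemma run_strategy_sum:
  "run_strategy s (\<lambda>z. \<Sum>i\<in>I. c i * f i z)
    = (\<lambda>z. \<Sum>i\<in>I. c i * run_strategy s (f i) z)"
proof (induction s arbitrary: f)
  case (Cons ab s)
  then show ?case by (cases ab) (simp add: equil_sum)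
qed simp

lemma equil_const [simp]: "equil a b (\<lambda>_. k) = (\<lambda>_. k)"
  by (auto simp: equil_def)

lemma run_strategy_const: "run_strategy s (\<lambda>_. k) = (\<lambda>_. k)"
proof (induction s)
  case (Cons ab s)
  then show ?case by (cases ab) simp
qed simp

lemma blue_total_run_strategy:
  fixes y :: "'a::finite \<Rightarrow> real"
  shows "blue_total bl (run_strategy s y)
    = (\<Sum>b\<in>UNIV. y b * blue_total bl (run_strategy s (indicator {b})))"
proof -
  have "y = (\<lambda>z. \<Sum>b\<in>UNIV. y b * indicator {b} z)"
    by (rule ext) (simp add: indicator_def)
  then have "run_strategy s y = run_strategy s (\<lambda>z. \<Sum>b\<in>UNIV. y b * indicator {b} z)"
    by (rule arg_cong)
  also have "\<dots> = (\<lambda>z. \<Sum>b\<in>UNIV. y b * run_strategy s (indicator {b}) z)"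
    by (rule run_strategy_sum)
  finally show ?thesis
    by (simp add: blue_total_def sum_distrib_left sum.swap[of _ "{a. bl a}"])
qed

lemma blue_total_run_indicator:
  fixes T :: "'a::finite set"
  shows "blue_total bl (run_strategy s (indicator T))
    = (\<Sum>b\<in>T. blue_total bl (run_strategy s (indicator {b})))"
  by (simp add: blue_total_run_strategy[of bl s "indicator T"])

lemma blue_total_run_midpoint:
  fixes f g :: "'a::finite \<Rightarrow> real"
  shows "blue_total bl (run_strategy s (\<lambda>z. (f z + g z) / 2))
    = (blue_total bl (run_strategy s f) + blue_total bl (run_strategy s g)) / 2"
proof -
  define c where "c b = blue_total bl (run_strategy s (indicator {b}))" for b
  have "blue_total bl (run_strategy s (\<lambda>z. (f z + g z) / 2))
      = (\<Sum>b\<in>UNIV. (f b + g b) / 2 * c b)"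
    unfolding c_def by (rule blue_total_run_strategy)
  also have "\<dots> = ((\<Sum>b\<in>UNIV. f b * c b) + (\<Sum>b\<in>UNIV. g b * c b)) / 2"
    by (simp add: sum.distrib distrib_right flip: sum_divide_distrib)
  also have "\<dots> = (blue_total bl (run_strategy s f) + blue_total bl (run_strategy s g)) / 2"
    unfolding c_def by (simp only: blue_total_run_strategy[symmetric])
  finally show ?thesis .
qed

lemma equil_indicator_midpoint:
  fixes S :: "'a::finite set"
  assumes "a \<noteq> b"
  obtains A B where "equil a b (indicator S) = (\<lambda>z. (indicator A z + indicator B z) / 2)"
    and "potential bl A + potential bl B \<le> 2 * potential bl S"
proof -
  have split: "\<exists>A B. equil u v (indicator S) = (\<lambda>z. (indicator A z + indicator B z) / 2)
      \<and> potential bl A + potential bl B \<le> 2 * potential bl S"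
    if "u \<in> S" "v \<notin> S" for u v
  proof -
    define Z where "Z = S - {u}"
    have S: "S = insert u Z" and Z: "u \<notin> Z" "v \<notin> Z"
      using that by (auto simp: Z_def)
    show ?thesis
    proof (cases "bl u = bl v")
      case True
      have "equil u v (indicator S) = (\<lambda>z. (indicator S z + indicator (insert v Z) z) / 2)"
        using that by (auto simp: equil_def fun_eq_iff Z_def indicator_def)
      moreover have "potential bl (insert v Z) = potential bl S"
        using potential_exchange[OF True Z] S by simp
      ultimately show ?thesis by fastforce
    next
      case False
      have "equil u v (indicator S) = (\<lambda>z. (indicator (insert v S) z + indicator Z z) / 2)"
        using that by (auto simp: equil_def fun_eq_iff Z_def indicator_def)
      moreover have "potential bl (insert v S) + potential bl Z \<le> 2 * potential bl S"
      proof (cases "bl u")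
        case True
        then show ?thesis
          using potential_insert_blue[of bl v u Z] False Z S by simp
      next
        case False
        then show ?thesis
          using potential_insert_red[of bl u v Z] \<open>bl u \<noteq> bl v\<close> Z S by (simp add: insert_commute)
      qed
      ultimately show ?thesis by fastforce
    qed
  qed
  consider "(a \<in> S) = (b \<in> S)" | "a \<in> S" "b \<notin> S" | "b \<in> S" "a \<notin> S"
    by blast
  then show thesis
  proof cases
    case 1
    then have "equil a b (indicator S) = (\<lambda>z. (indicator S z + indicator S z) / 2)"
      by (auto simp: equil_def fun_eq_iff indicator_def)
    then show thesis by (rule that) simp
  next
    case 2
    then show thesis using split[of a b] that by blast
  next
    case 3
    then show thesis using split[of b a] that by (metis equil_commute)
  qed
qed

lemma blue_total_run_indicator_le_potential:
  fixes S :: "'a::finite set"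
  assumes "valid_strategy s"
  shows "blue_total bl (run_strategy s (indicator S)) \<le> potential bl S"
  using assms
proof (induction s arbitrary: S)
  case Nil
  have "blue_total bl (indicator S) = card ({a. bl a} \<inter> S)"
    by (simp add: blue_total_def indicator_def of_bool_def sum.If_cases)
  also have "{a. bl a} \<inter> S = {z \<in> S. bl z}"
    by auto
  finally have "blue_total bl (indicator S) = card_filter bl S"
    by (simp add: card_filter_def)
  then show ?case using gain_nonneg by (simp add: potential_def)
next
  case (Cons ab s)
  obtain a b where ab: "ab = (a, b)" and "a \<noteq> b" and s: "valid_strategy s"
    using Cons.prems by (cases ab) (auto simp: valid_strategy_def)
  obtain A B where split: "equil a b (indicator S) = (\<lambda>z. (indicator A z + indicator B z) / 2)"
    and le: "potential bl A + potential bl B \<le> 2 * potential bl S"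
    using equil_indicator_midpoint[OF \<open>a \<noteq> b\<close>] by blast
  have "blue_total bl (run_strategy (ab # s) (indicator S))
      = (blue_total bl (run_strategy s (indicator A))
          + blue_total bl (run_strategy s (indicator B))) / 2"
    by (simp add: ab split blue_total_run_midpoint)
  also have "\<dots> \<le> (potential bl A + potential bl B) / 2"
    using Cons.IH[OF s, of A] Cons.IH[OF s, of B] by simp
  also have "\<dots> \<le> potential bl S"
    using le by simp
  finally show ?case .
qed

lemma sum_antimono_mult_nonneg:
  fixes u a :: "nat \<Rightarrow> real"
  assumes antimono: "\<And>j. Suc j < n \<Longrightarrow> u (Suc j) \<le> u j"
    and partial: "\<And>k. k \<le> n \<Longrightarrow> 0 \<le> (\<Sum>j<k. a j)"
    and total: "(\<Sum>j<n. a j) = 0"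
  shows "0 \<le> (\<Sum>j<n. u j * a j)"
proof (cases n)
  case (Suc m)
  have "u k * (\<Sum>j<Suc k. a j) \<le> (\<Sum>j<Suc k. u j * a j)" if "k < n" for k
    using that
  proof (induction k)
    case (Suc k)
    have "u (Suc k) * (\<Sum>j<Suc k. a j) \<le> u k * (\<Sum>j<Suc k. a j)"
      using antimono[of k] partial[of "Suc k"] Suc.prems by (simp add: mult_right_mono)
    then show ?case
      using Suc by (simp add: distrib_left)
  qed simp
  from this[of m] show ?thesis
    using Suc total by simp
qed simp

lemma sum_set_conv_nth: "distinct r \<Longrightarrow> (\<Sum>b\<in>set r. f b) = (\<Sum>k<length r. f (r ! k))"
  by (simp flip: sum_list_distinct_conv_sum_set add: sum_list_sum_nth atLeast0LessThan)

fun row_value :: "('a::finite \<Rightarrow> bool) \<Rightarrow> ('a \<Rightarrow> real) \<Rightarrow> 'a set \<Rightarrow> 'a list \<Rightarrow> real" where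
  "row_value bl y X [] = 0"
| "row_value bl y X (a # r) =
     y a * (potential bl (insert a X) - potential bl X) + row_value bl y (insert a X) r"

lemma row_value_append:
  "row_value bl y X (p @ r) = row_value bl y X p + row_value bl y (X \<union> set p) r"
  by (induction p arbitrary: X) auto

lemma row_value_cong:
  "(\<And>z. z \<in> set r \<Longrightarrow> y z = y' z) \<Longrightarrow> row_value bl y X r = row_value bl y' X r"
  by (induction r arbitrary: X) auto

lemma row_value_conv_sum:
  "row_value bl y X r = (\<Sum>k<length r. y (r ! k) *
     (potential bl (X \<union> set (take (Suc k) r)) - potential bl (X \<union> set (take k r))))"
proof (induction r arbitrary: X)
  case (Cons a r)
  then show ?case
    by (simp add: sum.lessThan_Suc_shift del: sum.lessThan_Suc)
qed simp

lemma blue_total_run_le_row_value: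
  fixes x :: "'a::finite \<Rightarrow> real"
  assumes r: "distinct r" "set r = UNIV" and sorted: "sorted_wrt (\<lambda>a b. x b \<le> x a) r"
    and s: "valid_strategy s"
  shows "blue_total bl (run_strategy s x) \<le> row_value bl x {} r"
proof -
  define n where "n = length r"
  define c where "c b = blue_total bl (run_strategy s (indicator {b}))" for b
  define h where "h k = potential bl (set (take k r))" for k
  define a where "a k = h (Suc k) - h k - c (r ! k)" for k
  have prefix:
    "blue_total bl (run_strategy s (indicator (set (take k r)))) = (\<Sum>j<k. c (r ! j))"
    if "k \<le> n" for k
  proof -
    have "blue_total bl (run_strategy s (indicator (set (take k r))))
        = (\<Sum>b\<in>set (take k r). c b)"
      unfolding c_def by (rule blue_total_run_indicator)
    also have "\<dots> = (\<Sum>j<k. c (r ! j))"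
      using that r(1) by (simp add: sum_set_conv_nth n_def min_def)
    finally show ?thesis .
  qed
  have partial:
    "(\<Sum>j<k. a j) = h k - blue_total bl (run_strategy s (indicator (set (take k r))))"
    if "k \<le> n" for k
  proof -
    have "(\<Sum>j<k. a j) = (\<Sum>j<k. h (Suc j) - h j) - (\<Sum>j<k. c (r ! j))"
      unfolding a_def by (rule sum_subtractf)
    moreover have "h 0 = 0"
      by (simp add: h_def potential_empty)
    ultimately show ?thesis
      using prefix[OF that] sum_lessThan_telescope[of h k] by simp
  qed
  have "indicator UNIV = (\<lambda>_. 1 :: real)"
    by auto
  then have "blue_total bl (run_strategy s (indicator UNIV)) = card_filter bl UNIV"
    by (simp add: run_strategy_const blue_total_def card_filter_def)
  then have total: "(\<Sum>j<n. a j) = 0"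
    using partial[of n] r(2) by (simp add: h_def n_def potential_contains_blue)
  have "0 \<le> (\<Sum>k<n. x (r ! k) * a k)"
  proof (rule sum_antimono_mult_nonneg[OF _ _ total])
    show "x (r ! Suc j) \<le> x (r ! j)" if "Suc j < n" for j
      using sorted that by (simp add: sorted_wrt_iff_nth_less n_def)
    show "0 \<le> (\<Sum>j<k. a j)" if "k \<le> n" for k
      using partial[OF that] blue_total_run_indicator_le_potential[OF s] by (simp add: h_def)
  qed
  then have "(\<Sum>k<n. x (r ! k) * c (r ! k)) \<le> (\<Sum>k<n. x (r ! k) * (h (Suc k) - h k))"
    by (simp add: a_def right_diff_distrib sum_subtractf)
  moreover have "blue_total bl (run_strategy s x) = (\<Sum>k<n. x (r ! k) * c (r ! k))"
    using blue_total_run_strategy[of bl s x] sum_set_conv_nth[OF r(1)] r(2)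
    by (simp add: c_def n_def)
  moreover have "row_value bl x {} r = (\<Sum>k<n. x (r ! k) * (h (Suc k) - h k))"
    by (simp add: row_value_conv_sum h_def n_def)
  ultimately show ?thesis by simp
qed

lemma proc_step_swap:
  assumes "proc_step bl s s'"
  obtains p a b t where "fst s = p @ a # b # t" "fst s' = p @ b # a # t"
    and "\<not> bl a" "bl b" "snd s' = equil a b (snd s)"
proof -
  obtain i where i: "Suc i < length (fst s)" "\<not> bl (fst s ! i)" "bl (fst s ! Suc i)"
    "snd s' = equil (fst s ! i) (fst s ! Suc i) (snd s)"
    "fst s' = (fst s)[i := fst s ! Suc i, Suc i := fst s ! i]"
    using assms unfolding proc_step_def by blast
  define r where "r = fst s"
  define p where "p = take i r"
  define t where "t = drop (Suc (Suc i)) r"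
  have "length p = i"
    using i(1) by (simp add: p_def r_def)
  have r: "r = p @ r ! i # r ! Suc i # t"
    using i(1) unfolding p_def t_def r_def
    by (metis Cons_nth_drop_Suc Suc_lessD append_take_drop_id)
  have "r[i := r ! Suc i, Suc i := r ! i] = p @ r ! Suc i # r ! i # t"
    by (subst (1) r) (simp add: \<open>length p = i\<close> list_update_append)
  then show thesis
    using that i r unfolding r_def by metis
qed

fun inversions :: "('a \<Rightarrow> bool) \<Rightarrow> 'a list \<Rightarrow> nat" where
  "inversions bl [] = 0"
| "inversions bl (a # r) = (if bl a then 0 else length (filter bl r)) + inversions bl r"

lemma inversions_append:
  "inversions bl (p @ r)
    = inversions bl p + inversions bl r + length (filter (\<lambda>z. \<not> bl z) p) * length (filter bl r)"
  by (induction p) auto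

lemma proc_step_terminates: "\<nexists>f. \<forall>n. proc_step bl (f n) (f (Suc n))"
proof
  assume "\<exists>f. \<forall>n. proc_step bl (f n) (f (Suc n))"
  then obtain f where f: "\<And>n. proc_step bl (f n) (f (Suc n))"
    by blast
  obtain k where "(f (Suc k), f k) \<notin> measure (inversions bl \<circ> fst)"
    using wf_no_infinite_down_chainE[OF wf_measure] by blast
  moreover have "(f (Suc k), f k) \<in> measure (inversions bl \<circ> fst)"
    using f[of k] by (elim proc_step_swap) (simp add: inversions_append)
  ultimately show False
    by contradiction
qed

lemma row_value_swap_equil:
  assumes "distinct (p @ a # b # t)" "\<not> bl a" "bl b"
  shows "row_value bl (equil a b y) {} (p @ b # a # t) = row_value bl y {} (p @ a # b # t)"
proof -
  define Z where "Z = set p"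
  define P0 P1 P2 where "P0 = potential bl Z" and "P1 = potential bl (insert a Z)"
    and "P2 = potential bl (insert a (insert b Z))"
  have "2 * P1 = P0 + P2"
    using potential_insert_red[of bl a b Z] assms by (simp add: Z_def P0_def P1_def P2_def)
  then have P1: "P1 - P0 = (P2 - P0) / 2" "P2 - P1 = (P2 - P0) / 2"
    by (simp_all add: field_simps)
  have prefix: "row_value bl (equil a b y) {} p = row_value bl y {} p"
    by (rule row_value_cong) (use assms in \<open>auto simp: equil_def\<close>)
  have suffix: "row_value bl (equil a b y) X t = row_value bl y X t" for X
    by (rule row_value_cong) (use assms in \<open>auto simp: equil_def\<close>)
  have "row_value bl (equil a b y) {} (p @ b # a # t)
      = row_value bl y {} p + (y a + y b) / 2 * (P2 - P0)
        + row_value bl y (insert a (insert b Z)) t"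
    using assms prefix suffix
    by (simp add: row_value_append Z_def P0_def P2_def equil_def algebra_simps)
  also have "\<dots> = row_value bl y {} p + (y a * (P1 - P0) + y b * (P2 - P1))
      + row_value bl y (insert a (insert b Z)) t"
    unfolding P1 by (simp add: field_simps)
  also have "\<dots> = row_value bl y {} (p @ a # b # t)"
    by (simp add: row_value_append Z_def P0_def P1_def P2_def insert_commute)
  finally show ?thesis .
qed

lemma proc_step_invariants:
  assumes "proc_step bl s s'" "distinct (fst s)"
  shows "distinct (fst s') \<and> set (fst s') = set (fst s)
    \<and> row_value bl (snd s') {} (fst s') = row_value bl (snd s) {} (fst s)"
proof -
  obtain p a b t where "fst s = p @ a # b # t" "fst s' = p @ b # a # t"
    and "\<not> bl a" "bl b" "snd s' = equil a b (snd s)"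
    using assms(1) by (rule proc_step_swap)
  with assms(2) show ?thesis
    by (simp add: row_value_swap_equil insert_commute eq_commute[of b a])
qed

lemma proc_step_rtranclp_invariants:
  assumes "(proc_step bl)\<^sup>*\<^sup>* s0 s" "distinct (fst s0)"
  shows "distinct (fst s) \<and> set (fst s) = set (fst s0)
    \<and> row_value bl (snd s) {} (fst s) = row_value bl (snd s0) {} (fst s0)"
  using assms(1)
proof (induction rule: rtranclp_induct)
  case (step s s')
  then show ?case
    using proc_step_invariants[OF step.hyps(2)] by simp
qed (simp add: assms(2))

lemma not_red_left_of_blue_dropWhile:
  assumes "\<not> red_left_of_blue bl r" "z \<in> set (dropWhile bl r)"
  shows "\<not> bl z"
proof
  assume "bl z"
  define p t where "p = takeWhile bl r" and "t = dropWhile bl r"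
  have r: "r = p @ t"
    by (simp add: p_def t_def)
  have "z \<in> set t"
    using assms(2) by (simp add: t_def)
  then have "t \<noteq> []"
    by auto
  then have "\<not> bl (t ! 0)"
    using hd_dropWhile[of bl r] by (simp add: t_def hd_conv_nth)
  obtain j where "j < length t" "t ! j = z"
    using \<open>z \<in> set t\<close> by (auto simp: in_set_conv_nth)
  with \<open>bl z\<close> \<open>\<not> bl (t ! 0)\<close> have "0 < j"
    by (cases j) auto
  then have "red_left_of_blue bl r"
    unfolding red_left_of_blue_def r
    using \<open>j < length t\<close> \<open>t ! j = z\<close> \<open>bl z\<close> \<open>\<not> bl (t ! 0)\<close>
    by (intro exI[of _ "length p"] exI[of _ "length p + j"]) (simp add: nth_append)
  with assms(1) show False ..
qed

lemma row_value_all_blue: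
  "\<lbrakk>\<forall>z\<in>set p. bl z; \<forall>z\<in>X. bl z; distinct p; set p \<inter> X = {}\<rbrakk>
   \<Longrightarrow> row_value bl y X p = (\<Sum>z\<in>set p. y z)"
proof (induction p arbitrary: X)
  case (Cons a p)
  then have "a \<notin> X" "\<forall>z\<in>insert a X. bl z"
    by auto
  then have "potential bl (insert a X) - potential bl X = 1"
    by (simp add: potential_no_red)
  moreover have "row_value bl y (insert a X) p = (\<Sum>z\<in>set p. y z)"
    using Cons.prems by (intro Cons.IH) auto
  ultimately show ?case
    using Cons.prems by simp
qed simp

lemma row_value_all_red:
  "\<lbrakk>\<forall>z\<in>set t. \<not> bl z; {z. bl z} \<subseteq> X\<rbrakk> \<Longrightarrow> row_value bl y X t = 0"
proof (induction t arbitrary: X)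
  case (Cons a t)
  then have "potential bl (insert a X) = potential bl X"
    by (simp add: potential_contains_blue subset_insertI2)
  moreover have "row_value bl y (insert a X) t = 0"
    using Cons.prems by (intro Cons.IH) auto
  ultimately show ?case
    by simp
qed simp

lemma row_value_not_red_left_of_blue:
  assumes "distinct r" "set r = UNIV" "\<not> red_left_of_blue bl r"
  shows "row_value bl y {} r = blue_total bl y"
proof -
  define p t where "p = takeWhile bl r" and "t = dropWhile bl r"
  have r: "r = p @ t"
    by (simp add: p_def t_def)
  have p: "\<forall>z\<in>set p. bl z"
    by (auto simp: p_def dest: set_takeWhileD)
  have t: "\<forall>z\<in>set t. \<not> bl z"
    using not_red_left_of_blue_dropWhile[OF assms(3)] by (simp add: t_def)
  have blues: "set p = {z. bl z}"
    using p t assms(2) unfolding r by auto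
  have "row_value bl y {} r = row_value bl y {} p + row_value bl y (set p) t"
    by (simp add: r row_value_append)
  also have "row_value bl y {} p = (\<Sum>z\<in>set p. y z)"
    using assms(1) p by (intro row_value_all_blue) (auto simp: r)
  also have "row_value bl y (set p) t = 0"
    using t blues by (intro row_value_all_red) auto
  finally show ?thesis
    by (simp add: blue_total_def blues)
qed

theorem mainTheorem3:
  fixes blue :: "'a::finite \<Rightarrow> bool" and x :: "'a \<Rightarrow> real" and r0 :: "'a list"
  assumes "initial_row blue x r0"
  shows "(\<nexists>f. f 0 = (r0, x) \<and> (\<forall>n. proc_step blue (f n) (f (Suc n))))
    \<and> (\<forall>s. (proc_step blue)\<^sup>*\<^sup>* (r0, x) s \<and> \<not> red_left_of_blue blue (fst s) \<longrightarrow>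
         (\<forall>strat. valid_strategy strat \<longrightarrow>
            blue_total blue (run_strategy strat x) \<le> blue_total blue (snd s)))"
proof (intro conjI allI impI)
  show "\<nexists>f. f 0 = (r0, x) \<and> (\<forall>n. proc_step blue (f n) (f (Suc n)))"
    using proc_step_terminates by blast
next
  fix s :: "'a list \<times> ('a \<Rightarrow> real)" and strat :: "('a \<times> 'a) list"
  assume s: "(proc_step blue)\<^sup>*\<^sup>* (r0, x) s \<and> \<not> red_left_of_blue blue (fst s)"
    and strat: "valid_strategy strat"
  have r0: "distinct r0" "set r0 = UNIV" and sorted: "sorted_wrt (\<lambda>a b. x b \<le> x a) r0"
    using assms by (auto simp: initial_row_def elim: sorted_wrt_mono_rel[rotated])
  have s_inv: "distinct (fst s)" "set (fst s) = UNIV"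
    "row_value blue (snd s) {} (fst s) = row_value blue x {} r0"
    using proc_step_rtranclp_invariants[of blue "(r0, x)" s] s r0 by auto
  have "blue_total blue (run_strategy strat x) \<le> row_value blue x {} r0"
    by (rule blue_total_run_le_row_value[OF r0 sorted strat])
  also have "\<dots> = row_value blue (snd s) {} (fst s)"
    using s_inv(3) by simp
  also have "\<dots> = blue_total blue (snd s)"
    using row_value_not_red_left_of_blue[OF s_inv(1,2)] s by simp
  finally show "blue_total blue (run_strategy strat x) \<le> blue_total blue (snd s)" .
qed

end
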